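(* Let $s\ge0$, $p\in[1,+\infty)$ and $f\in B^{s,\infty}_p(\mathbb R^d)$. Then $$\dim_{\mathcal H}\big(\{x\in\mathbb R^d:\ (P_jf(x))_{j}\text{ diverges}\}\big)\le d-sp$$ (in particular this set is empty when $d-sp<0$). The wavelets are not assumed to be compactly supported.
   Context: Standing setup. $(V_j)_{j\in\mathbb Z}$ is an orthogonal multiresolution analysis of $L^2(\mathbb R^d)$ with scaling function $\varphi$ (the integer translates of $\varphi$ form an orthonormal basis of $V_0$), and $\psi^{(1)},\dots,\psi^{(2^d-1)}$ are associated wavelets: the functions $2^{dj/2}\psi^{(i)}(2^j\cdot-k)$ form an orthonormal basis of $L^2(\mathbb R^d)$. The functions $\varphi,\psi^{(i)}$ are smooth (at least $\lfloor s\rfloor+1$ continuous derivatives), and they and these derivatives have fast decay: for every $N\ge0$ there is $C_N$ with $|\psi^{(i)}(x)|\le C_N(1+\|x\|)^{-N}$. $\|\cdot\|$ is the supremum norm. For $j\ge0$, $k\in\mathbb Z^d$, the dyadic cube $\lambda=(j,k)$ is $\prod_{m=1}^d[k_m2^{-j},(k_m+1)2^{-j})$; $\Lambda_j$ is the set of such cubes; $\psi^{(i)}_\lambda(x)=\psi^{(i)}(2^jx-k)$. For $f$ set $C_k=\int\overline{\varphi(x-k)}f$, $c^{(i)}_\lambda=2^{dj}\int\overline{\psi^{(i)}_\lambda}f$, $Q_lf(x)=\sum_i\sum_{\lambda\in\Lambda_l}c^{(i)}_\lambda\psi^{(i)}_\lambda(x)$, $P_jf(x)=\sum_kC_k\varphi(x-k)+\sum_{0\le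 l<j}Q_lf(x)$. $B^{s,\infty}_p(\mathbb R^d)$ is the set of $f$ with $(C_k)\in\ell^p$ and $\sup_{j\ge0}2^{(s-d/p)j}(\sum_i\sum_{\lambda\in\Lambda_j}|c^{(i)}_\lambda|^p)^{1/p}<\infty$. $\dim_{\mathcal H}$ is Hausdorff dimension. *)

theory Defs
  imports "HOL-Analysis.Analysis"
begin

type_synonym 'd fn = "real ^ 'd \<Rightarrow> complex"

definition L2 :: "'d::finite fn \<Rightarrow> bool" where
  "L2 f \<longleftrightarrow> f \<in> borel_measurable lborel \<and> integrable lborel (\<lambda>x. (cmod (f x))\<^sup>2)"

definition l2inner :: "'d::finite fn \<Rightarrow> 'd fn \<Rightarrow> complex" where
  "l2inner f g = (LINT x|lborel. f x * cnj (g x))"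

definition ae_zero :: "'d::finite fn \<Rightarrow> bool" where
  "ae_zero f \<longleftrightarrow> (AE x in lborel. f x = 0)"

text \<open>Closed linear span in L^2 of a family, as the double orthogonal complement.\<close>
definition cspan :: "'d::finite fn set \<Rightarrow> 'd fn set" where
  "cspan A = {g. L2 g \<and> (\<forall>h. L2 h \<and> (\<forall>a\<in>A. l2inner h a = 0) \<longrightarrow> l2inner g h = 0)}"

definition orthonormal_on :: "'i set \<Rightarrow> ('i \<Rightarrow> 'd::finite fn) \<Rightarrow> bool" where
  "orthonormal_on I e \<longleftrightarrow>
     (\<forall>i\<in>I. L2 (e i) \<and> l2inner (e i) (e i) = 1) \<and>
     (\<forall>i\<in>I. \<forall>i'\<in>I. i \<noteq> i' \<longrightarrow> l2inner (e i) (e i') = 0)"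

definition onb_on :: "'i set \<Rightarrow> ('i \<Rightarrow> 'd::finite fn) \<Rightarrow> bool" where
  "onb_on I e \<longleftrightarrow> orthonormal_on I e \<and>
     (\<forall>h. L2 h \<and> (\<forall>i\<in>I. l2inner h (e i) = 0) \<longrightarrow> ae_zero h)"

definition ivec :: "int ^ 'd \<Rightarrow> real ^ 'd" where
  "ivec k = (\<chi> m. real_of_int (k $ m))"

definition dil :: "int \<Rightarrow> int ^ 'd \<Rightarrow> 'd::finite fn \<Rightarrow> 'd fn" where
  "dil j k g = (\<lambda>x. complex_of_real (2 powr (real CARD('d) * real_of_int j / 2)) *
                    g ((2 powr real_of_int j) *\<^sub>R x - ivec k))"

definition Vspace :: "'d::finite fn \<Rightarrow> int \<Rightarrow> 'd fn set" where
  "Vspace \<phi> j = cspan (range (\<lambda>k. dil j k \<phi>))"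

definition orth_MRA :: "'d::finite fn \<Rightarrow> bool" where
  "orth_MRA \<phi> \<longleftrightarrow>
     orthonormal_on UNIV (\<lambda>k. dil 0 k \<phi>) \<and>
     (\<forall>j. Vspace \<phi> j \<subseteq> Vspace \<phi> (j + 1)) \<and>
     (\<forall>g. (\<forall>j. g \<in> Vspace \<phi> j) \<longrightarrow> ae_zero g) \<and>
     (\<forall>h. L2 h \<and> (\<forall>j. \<forall>g\<in>Vspace \<phi> j. l2inner h g = 0) \<longrightarrow> ae_zero h)"

definition associated_wavelets :: "'d::finite fn \<Rightarrow> (nat \<Rightarrow> 'd fn) \<Rightarrow> bool" where
  "associated_wavelets \<phi> \<psi> \<longleftrightarrow>
     (\<forall>i\<in>{1..2^CARD('d) - 1}. \<psi> i \<in> Vspace \<phi> 1 \<and> (\<forall>g\<in>Vspace \<phi> 0. l2inner (\<psi> i) g = 0)) \<and>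
     onb_on ({1..2^CARD('d) - 1} \<times> UNIV \<times> UNIV) (\<lambda>(i, j, k). dil j k (\<psi> i))"

definition fast_decay :: "'d::finite fn \<Rightarrow> bool" where
  "fast_decay f \<longleftrightarrow> (\<forall>N::nat. \<exists>C. \<forall>x. cmod (f x) \<le> C * (1 + infnorm x) powr (- real N))"

primrec smooth_decay :: "nat \<Rightarrow> 'd::finite fn \<Rightarrow> bool" where
  "smooth_decay 0 f = (continuous_on UNIV f \<and> fast_decay f)"
| "smooth_decay (Suc n) f = (continuous_on UNIV f \<and> fast_decay f \<and>
      (\<exists>f'. (\<forall>x. (f has_derivative f' x) (at x)) \<and>
            (\<forall>v\<in>(Basis :: (real^'d) set). smooth_decay n (\<lambda>x. f' x v))))"

definition coefC :: "'d::finite fn \<Rightarrow> 'd fn \<Rightarrow> int ^ 'd \<Rightarrow> complex" where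
  "coefC \<phi> f k = (LINT x|lborel. cnj (\<phi> (x - ivec k)) * f x)"

definition psi_lam :: "'d::finite fn \<Rightarrow> nat \<Rightarrow> int ^ 'd \<Rightarrow> 'd fn" where
  "psi_lam g j k = (\<lambda>x. g ((2 ^ j) *\<^sub>R x - ivec k))"

definition coefc :: "'d::finite fn \<Rightarrow> 'd fn \<Rightarrow> nat \<Rightarrow> int ^ 'd \<Rightarrow> complex" where
  "coefc g f j k = of_real (2 ^ (CARD('d) * j)) * (LINT x|lborel. cnj (psi_lam g j k x) * f x)"

definition Qop :: "(nat \<Rightarrow> 'd::finite fn) \<Rightarrow> 'd fn \<Rightarrow> nat \<Rightarrow> 'd fn" where
  "Qop \<psi> f l x = (\<Sum>i\<in>{1..2^CARD('d) - 1}.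
       \<Sum>\<^sub>\<infinity>k. coefc (\<psi> i) f l k * psi_lam (\<psi> i) l k x)"

definition Pop :: "'d::finite fn \<Rightarrow> (nat \<Rightarrow> 'd fn) \<Rightarrow> 'd fn \<Rightarrow> nat \<Rightarrow> 'd fn" where
  "Pop \<phi> \<psi> f j x = (\<Sum>\<^sub>\<infinity>k. coefC \<phi> f k * \<phi> (x - ivec k)) + (\<Sum>l<j. Qop \<psi> f l x)"

definition besov :: "real \<Rightarrow> real \<Rightarrow> 'd::finite fn \<Rightarrow> (nat \<Rightarrow> 'd fn) \<Rightarrow> 'd fn \<Rightarrow> bool" where
  "besov s p \<phi> \<psi> f \<longleftrightarrow>
     (\<forall>k. integrable lborel (\<lambda>x. cnj (\<phi> (x - ivec k)) * f x)) \<and>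
     (\<forall>i\<in>{1..2^CARD('d) - 1}. \<forall>j k. integrable lborel (\<lambda>x. cnj (psi_lam (\<psi> i) j k x) * f x)) \<and>
     (\<lambda>k. cmod (coefC \<phi> f k) powr p) summable_on UNIV \<and>
     (\<forall>i\<in>{1..2^CARD('d) - 1}. \<forall>j. (\<lambda>k. cmod (coefc (\<psi> i) f j k) powr p) summable_on UNIV) \<and>
     (\<exists>M. \<forall>j. 2 powr ((s - real CARD('d) / p) * real j) *
          (\<Sum>i\<in>{1..2^CARD('d) - 1}. \<Sum>\<^sub>\<infinity>k. cmod (coefc (\<psi> i) f j k) powr p) powr (1 / p) \<le> M)"

definition hausdorff_pre :: "real \<Rightarrow> real \<Rightarrow> 'a::metric_space set \<Rightarrow> ennreal" where
  "hausdorff_pre t \<delta> E = (INF U\<in>{U :: nat \<Rightarrow> 'a set. (\<forall>n. bounded (U n) \<and> diameter (U n) \<le> \<delta>) \<and> E \<subseteq> (\<Union>n. U n)}.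
        (\<Sum>n. ennreal (diameter (U n) powr t)))"

definition hausdorff_measure :: "real \<Rightarrow> 'a::metric_space set \<Rightarrow> ennreal" where
  "hausdorff_measure t E = (SUP \<delta>\<in>{0<..}. hausdorff_pre t \<delta> E)"

definition hausdorff_dim :: "'a::metric_space set \<Rightarrow> ereal" where
  "hausdorff_dim E = (if E = {} then -\<infinity>
      else Inf {ereal t | t. t > 0 \<and> hausdorff_measure t E = 0})"

end

theory Submission
  imports Defs
begin

text \<open>
  The Besov bound says that at level j at most C 2^((d - s p + \<epsilon> p) j) wavelet
  coefficients exceed 2^(-\<epsilon> j). Away from the balls of radius ~ 2^((\<eta> - 1) j) around
  the corresponding dyadic points, the fast decay of the wavelets makes the large
  coefficients contribute O(2^(-j)), and the small ones contribute O(2^(-\<epsilon> j)) because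
  the integer translates of a fast-decaying function have uniformly bounded sums. So
  the series of the Q_j f(x) converges at every x lying in only finitely many of these
  balls, and the divergence set is covered by the balls of any tail of levels. Their
  t-dimensional content is a geometric series once t > d - s p and \<epsilon>, \<eta> are small
  enough; if d - s p < 0 there are no large coefficients at all from some level on.
\<close>

section \<open>Lattice sums\<close>

lemma ivec_nth [simp]: "ivec k $ m = real_of_int (k $ m)"
  by (simp add: ivec_def)

lemma summable_inverse_square_Suc: "summable (\<lambda>j::nat. 1 / (real j + 1)^2)"
proof -
  have "summable (\<lambda>j::nat. inverse (real (Suc j) ^ 2))"
    by (subst summable_Suc_iff) (rule inverse_power_summable, simp)
  then show ?thesis by (simp add: field_simps)
qed

lemma sum_inverse_square_dist_right_le:
  fixes G :: "int set" and u :: real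
  assumes "finite G" and right: "\<And>n. n \<in> G \<Longrightarrow> u \<le> of_int n"
  shows "(\<Sum>n\<in>G. 1 / (1 + \<bar>u - of_int n\<bar>)^2) \<le> (\<Sum>j. 1 / (real j + 1)^2)"
proof -
  let ?h = "\<lambda>n. nat (n - \<lceil>u\<rceil>)"
  have "(\<Sum>n\<in>G. 1 / (1 + \<bar>u - of_int n\<bar>)^2) \<le> (\<Sum>n\<in>G. 1 / (real (?h n) + 1)^2)"
  proof (rule sum_mono)
    fix n assume "n \<in> G"
    then have "real (?h n) + 1 \<le> 1 + \<bar>u - of_int n\<bar>"
      using right[of n] ceiling_correct[of u] by simp
    then show "1 / (1 + \<bar>u - of_int n\<bar>)^2 \<le> 1 / (real (?h n) + 1)^2"
      by (simp add: frac_le power_mono)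
  qed
  also have "\<dots> = (\<Sum>j\<in>?h ` G. 1 / (real j + 1)^2)"
  proof -
    have "\<lceil>u\<rceil> \<le> n" if "n \<in> G" for n
      using right[OF that] by (simp add: ceiling_le_iff)
    then have "inj_on ?h G" by (intro inj_onI) (simp add: eq_nat_nat_iff)
    then show ?thesis by (simp add: sum.reindex)
  qed
  also have "\<dots> \<le> (\<Sum>j. 1 / (real j + 1)^2)"
    using \<open>finite G\<close> by (intro sum_le_suminf summable_inverse_square_Suc) auto
  finally show ?thesis .
qed

lemma sum_inverse_square_dist_le:
  fixes G :: "int set" and u :: real
  assumes "finite G"
  shows "(\<Sum>n\<in>G. 1 / (1 + \<bar>u - of_int n\<bar>)^2) \<le> 2 * (\<Sum>j. 1 / (real j + 1)^2)"
proof -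
  let ?w = "\<lambda>u n. 1 / (1 + \<bar>u - of_int n\<bar>)^2"
  define G1 where "G1 = {n\<in>G. u \<le> of_int n}"
  define G2 where "G2 = {n\<in>G. of_int n < u}"
  have fin: "finite G1" "finite G2" using assms by (auto simp: G1_def G2_def)
  have "G = G1 \<union> G2" "G1 \<inter> G2 = {}" by (auto simp: G1_def G2_def)
  then have "sum (?w u) G = sum (?w u) G1 + sum (?w u) G2"
    using fin by (simp add: sum.union_disjoint)
  moreover have "sum (?w u) G1 \<le> (\<Sum>j. 1 / (real j + 1)^2)"
    using fin by (intro sum_inverse_square_dist_right_le) (auto simp: G1_def)
  moreover have "sum (?w u) G2 = sum (?w (- u)) (uminus ` G2)"
    by (subst sum.reindex) (auto simp: abs_minus_commute)
  moreover have "sum (?w (- u)) (uminus ` G2) \<le> (\<Sum>j. 1 / (real j + 1)^2)"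
    using fin by (intro sum_inverse_square_dist_right_le) (auto simp: G2_def)
  ultimately show ?thesis by linarith
qed

lemma inverse_powr_infnorm_le_prod:
  fixes z :: "real ^ 'd::finite"
  shows "(1 + infnorm z) powr (- (2 * real CARD('d))) \<le> (\<Prod>m\<in>UNIV. 1 / (1 + \<bar>z $ m\<bar>)^2)"
proof -
  have pos: "0 < 1 + infnorm z" using infnorm_pos_le[of z] by linarith
  have "(1 + infnorm z) powr (- (2 * real CARD('d))) = 1 / (1 + infnorm z) ^ (2 * CARD('d))"
    using pos by (simp add: powr_minus_divide powr_realpow[symmetric])
  also have "(1 + infnorm z) ^ (2 * CARD('d)) = (\<Prod>m\<in>(UNIV::'d set). (1 + infnorm z)^2)"
    by (simp add: power_mult[symmetric] mult.commute)
  also have "1 / (\<Prod>m\<in>(UNIV::'d set). (1 + infnorm z)^2) \<le> 1 / (\<Prod>m\<in>UNIV. (1 + \<bar>z $ m\<bar>)^2)"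
  proof (rule divide_left_mono)
    show "(\<Prod>m\<in>UNIV. (1 + \<bar>z $ m\<bar>)^2) \<le> (\<Prod>m\<in>(UNIV::'d set). (1 + infnorm z)^2)"
      by (intro prod_mono conjI power_mono) (auto simp: component_le_infnorm_cart)
    show "0 < (\<Prod>m\<in>(UNIV::'d set). (1 + infnorm z)^2) * (\<Prod>m\<in>UNIV. (1 + \<bar>z $ m\<bar>)^2)"
      using pos by (intro mult_pos_pos prod_pos) auto
  qed simp
  also have "\<dots> = (\<Prod>m\<in>UNIV. 1 / (1 + \<bar>z $ m\<bar>)^2)"
    by (simp add: prod_dividef)
  finally show ?thesis .
qed

lemma sum_prod_components_le:
  fixes g :: "'d::finite \<Rightarrow> 'a \<Rightarrow> real" and F :: "('a ^ 'd) set"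
  assumes nonneg: "\<And>m n. 0 \<le> g m n"
    and bounded: "\<And>m G. finite G \<Longrightarrow> sum (g m) G \<le> H"
    and "finite F"
  shows "(\<Sum>k\<in>F. \<Prod>m\<in>UNIV. g m (k $ m)) \<le> H ^ CARD('d)"
proof -
  define B where "B m = (\<lambda>k. k $ m) ` F" for m
  have finB: "finite (B m)" for m using \<open>finite F\<close> by (simp add: B_def)
  have sub: "F \<subseteq> vec_lambda ` PiE UNIV B"
  proof
    fix k assume "k \<in> F"
    then have "vec_nth k \<in> PiE UNIV B" by (auto simp: B_def)
    then show "k \<in> vec_lambda ` PiE UNIV B" by (rule rev_image_eqI) simp
  qed
  have "(\<Sum>k\<in>F. \<Prod>m\<in>UNIV. g m (k $ m)) \<le> (\<Sum>k\<in>vec_lambda ` PiE UNIV B. \<Prod>m\<in>UNIV. g m (k $ m))"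
    using sub finB nonneg by (intro sum_mono2) (auto simp: finite_PiE intro: prod_nonneg)
  also have "\<dots> = (\<Sum>q\<in>PiE UNIV B. \<Prod>m\<in>UNIV. g m (q m))"
    by (simp add: sum.reindex inj_on_def vec_lambda_inject)
  also have "\<dots> = (\<Prod>m\<in>UNIV. \<Sum>n\<in>B m. g m n)"
    using finB by (simp add: prod_sum_PiE)
  also have "\<dots> \<le> (\<Prod>m\<in>(UNIV::'d set). H)"
    using finB nonneg bounded by (intro prod_mono) (auto intro: sum_nonneg)
  finally show ?thesis by simp
qed

lemma lattice_sum_inverse_powr_bounded:
  obtains L :: real where "\<And>(y::real ^ 'd::finite) F. finite F \<Longrightarrow>
       (\<Sum>k\<in>F. (1 + infnorm (y - ivec k)) powr (- (2 * real CARD('d)))) \<le> L"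
proof (rule that)
  fix y :: "real ^ 'd" and F :: "(int ^ 'd) set"
  assume "finite F"
  have "(\<Sum>k\<in>F. (1 + infnorm (y - ivec k)) powr (- (2 * real CARD('d))))
      \<le> (\<Sum>k\<in>F. \<Prod>m\<in>UNIV. (\<lambda>m n. 1 / (1 + \<bar>y $ m - of_int n\<bar>)^2) m (k $ m))"
    using inverse_powr_infnorm_le_prod[of "y - ivec _"] by (intro sum_mono) simp
  also have "\<dots> \<le> (2 * (\<Sum>j. 1 / (real j + 1)^2)) ^ CARD('d)"
    using \<open>finite F\<close> by (intro sum_prod_components_le) (auto simp: sum_inverse_square_dist_le)
  finally show "(\<Sum>k\<in>F. (1 + infnorm (y - ivec k)) powr (- (2 * real CARD('d))))
      \<le> (2 * (\<Sum>j. 1 / (real j + 1)^2)) ^ CARD('d)" .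
qed

section \<open>Counting large wavelet coefficients\<close>

lemma card_greater_powr_le_infsum:
  fixes c :: "'a \<Rightarrow> real"
  assumes summable: "(\<lambda>k. c k powr p) summable_on UNIV" and "0 < p" "0 < \<delta>"
  shows "finite {k. \<delta> < c k}" and "real (card {k. \<delta> < c k}) * \<delta> powr p \<le> (\<Sum>\<^sub>\<infinity>k. c k powr p)"
proof -
  have subset_le: "real (card F) * \<delta> powr p \<le> (\<Sum>\<^sub>\<infinity>k. c k powr p)"
    if F: "finite F" "F \<subseteq> {k. \<delta> < c k}" for F
  proof -
    have "real (card F) * \<delta> powr p = (\<Sum>k\<in>F. \<delta> powr p)" by simp
    also have "\<dots> \<le> (\<Sum>k\<in>F. c k powr p)"
      using F \<open>0 < p\<close> \<open>0 < \<delta>\<close> by (intro sum_mono powr_mono2) auto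
    also have "\<dots> \<le> (\<Sum>\<^sub>\<infinity>k. c k powr p)"
      by (rule finite_sum_le_infsum[OF summable F(1)]) auto
    finally show ?thesis .
  qed
  show "finite {k. \<delta> < c k}"
  proof (rule conjunct1[OF finite_if_finite_subsets_card_bdd])
    fix G assume "G \<subseteq> {k. \<delta> < c k}" "finite G"
    then have "real (card G) \<le> (\<Sum>\<^sub>\<infinity>k. c k powr p) / \<delta> powr p"
      using subset_le \<open>0 < \<delta>\<close> by (simp add: field_simps)
    then show "card G \<le> nat \<lceil>(\<Sum>\<^sub>\<infinity>k. c k powr p) / \<delta> powr p\<rceil>" by linarith
  qed
  then show "real (card {k. \<delta> < c k}) * \<delta> powr p \<le> (\<Sum>\<^sub>\<infinity>k. c k powr p)"
    by (rule subset_le) simp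
qed

lemma besov_level_sum_le:
  fixes \<psi> :: "nat \<Rightarrow> 'd::finite fn"
  assumes f: "besov s p \<phi> \<psi> f" and p: "1 \<le> p"
  obtains M where "0 \<le> M"
    "\<And>i j. i \<in> {1..2^CARD('d) - 1} \<Longrightarrow>
       (\<Sum>\<^sub>\<infinity>k. cmod (coefc (\<psi> i) f j k) powr p) \<le> M powr p * 2 powr ((real CARD('d) - s * p) * real j)"
proof -
  let ?I = "{1..2^CARD('d) - 1} :: nat set"
  let ?D = "real CARD('d)"
  define T where "T i j = (\<Sum>\<^sub>\<infinity>k. cmod (coefc (\<psi> i) f j k) powr p)" for i j
  define S where "S j = (\<Sum>i\<in>?I. T i j)" for j
  obtain M where M: "\<And>j. 2 powr ((s - ?D / p) * real j) * S j powr (1 / p) \<le> M"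
    using f unfolding besov_def S_def T_def by blast
  have T0: "0 \<le> T i j" for i j unfolding T_def by (rule infsum_nonneg) simp
  then have S0: "0 \<le> S j" for j unfolding S_def by (simp add: sum_nonneg)
  have M0: "0 \<le> M" using M[of 0] S0[of 0] by (meson order_trans powr_ge_zero zero_le_mult_iff)
  have S_le: "S j \<le> M powr p * 2 powr ((?D - s * p) * real j)" for j
  proof -
    have "S j powr (1 / p) = 2 powr (- ((s - ?D / p) * real j)) * (2 powr ((s - ?D / p) * real j) * S j powr (1 / p))"
      by (simp add: mult.assoc[symmetric] powr_add[symmetric])
    also have "\<dots> \<le> M * 2 powr (- ((s - ?D / p) * real j))"
      using M[of j] by (simp add: mult.commute)
    finally have "S j powr (1 / p) \<le> M * 2 powr (- ((s - ?D / p) * real j))" .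
    then have "(S j powr (1 / p)) powr p \<le> (M * 2 powr (- ((s - ?D / p) * real j))) powr p"
      using p by (intro powr_mono2) auto
    moreover have "(S j powr (1 / p)) powr p = S j"
      using p S0 by (simp add: powr_powr)
    moreover have "- ((s - ?D / p) * real j) * p = (?D - s * p) * real j"
      using p by (simp add: field_simps)
    ultimately show ?thesis using M0 by (simp add: powr_mult powr_powr)
  qed
  show ?thesis
  proof (rule that[OF M0])
    fix i j assume "i \<in> ?I"
    then have "T i j \<le> S j" unfolding S_def using T0 by (intro member_le_sum) auto
    then show "(\<Sum>\<^sub>\<infinity>k. cmod (coefc (\<psi> i) f j k) powr p) \<le> M powr p * 2 powr ((?D - s * p) * real j)"
      using S_le[of j] unfolding T_def by linarith
  qed
qed

definition large_coeffs :: "'d::finite fn \<Rightarrow> 'd fn \<Rightarrow> real \<Rightarrow> nat \<Rightarrow> (int ^ 'd) set" where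
  "large_coeffs g f \<epsilon> j = {k. 2 powr (- \<epsilon> * real j) < cmod (coefc g f j k)}"

lemma besov_coefficient_bounds:
  fixes \<psi> :: "nat \<Rightarrow> 'd::finite fn"
  assumes f: "besov s p \<phi> \<psi> f" and p: "1 \<le> p" and s: "0 \<le> s"
  obtains M where "0 \<le> M"
    "\<And>i j k. i \<in> {1..2^CARD('d) - 1} \<Longrightarrow> cmod (coefc (\<psi> i) f j k) \<le> M * 2 powr (real CARD('d) * real j)"
    "\<And>i j \<epsilon>. i \<in> {1..2^CARD('d) - 1} \<Longrightarrow> finite (large_coeffs (\<psi> i) f \<epsilon> j)"
    "\<And>i j \<epsilon>. i \<in> {1..2^CARD('d) - 1} \<Longrightarrow>
       real (card (large_coeffs (\<psi> i) f \<epsilon> j)) \<le> M powr p * 2 powr ((real CARD('d) - s * p + \<epsilon> * p) * real j)"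
proof -
  let ?I = "{1..2^CARD('d) - 1} :: nat set"
  let ?D = "real CARD('d)"
  obtain M where M0: "0 \<le> M" and level: "\<And>i j. i \<in> ?I \<Longrightarrow>
      (\<Sum>\<^sub>\<infinity>k. cmod (coefc (\<psi> i) f j k) powr p) \<le> M powr p * 2 powr ((?D - s * p) * real j)"
    using besov_level_sum_le[OF f p] by blast
  have summable: "(\<lambda>k. cmod (coefc (\<psi> i) f j k) powr p) summable_on UNIV" if "i \<in> ?I" for i j
    using f that unfolding besov_def by blast
  show ?thesis
  proof (rule that[OF M0])
    fix i j k assume i: "i \<in> ?I"
    have "cmod (coefc (\<psi> i) f j k) powr p \<le> (\<Sum>\<^sub>\<infinity>k. cmod (coefc (\<psi> i) f j k) powr p)"
      using finite_sum_le_infsum[OF summable[OF i], of "{k}"] by simp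
    also have "\<dots> \<le> M powr p * 2 powr ((?D - s * p) * real j)"
      by (rule level[OF i])
    finally have "(cmod (coefc (\<psi> i) f j k) powr p) powr (1 / p)
        \<le> (M powr p * 2 powr ((?D - s * p) * real j)) powr (1 / p)"
      using p by (intro powr_mono2) auto
    also have "\<dots> = M * 2 powr ((?D / p - s) * real j)"
      using p M0 by (simp add: powr_mult powr_powr field_simps)
    also have "\<dots> \<le> M * 2 powr (?D * real j)"
    proof (intro mult_left_mono M0 powr_mono)
      have "?D / p \<le> ?D" using p by (simp add: divide_le_eq_1 field_simps)
      then show "(?D / p - s) * real j \<le> ?D * real j" using s by (intro mult_right_mono) auto
    qed simp
    finally show "cmod (coefc (\<psi> i) f j k) \<le> M * 2 powr (?D * real j)"
      using p by (simp add: powr_powr)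
  next
    fix i j \<epsilon> assume i: "i \<in> ?I"
    note count = card_greater_powr_le_infsum[OF summable[OF i, of j], of "2 powr (- \<epsilon> * real j)"]
    show "finite (large_coeffs (\<psi> i) f \<epsilon> j)"
      using count p unfolding large_coeffs_def by simp
    have "real (card (large_coeffs (\<psi> i) f \<epsilon> j)) * 2 powr (- \<epsilon> * real j * p)
        \<le> M powr p * 2 powr ((?D - s * p) * real j)"
      using count(2) p level[OF i, of j] unfolding large_coeffs_def by (simp add: powr_powr)
    then show "real (card (large_coeffs (\<psi> i) f \<epsilon> j)) \<le> M powr p * 2 powr ((?D - s * p + \<epsilon> * p) * real j)"
      by (simp add: powr_minus powr_add[symmetric] field_simps)
  qed
qed

section \<open>The wavelet series off the exceptional balls\<close>

lemma lattice_series_bound: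
  fixes g :: "'d::finite fn" and a :: "int ^ 'd \<Rightarrow> complex" and y :: "real ^ 'd"
  assumes L: "\<And>F. finite F \<Longrightarrow> (\<Sum>k\<in>F. (1 + infnorm (y - ivec k)) powr (- (2 * real CARD('d)))) \<le> L"
    and N: "2 * real CARD('d) \<le> N" and C: "0 \<le> C"
    and g: "\<And>z. cmod (g z) \<le> C * (1 + infnorm z) powr (- N)"
    and A: "\<And>k. cmod (a k) \<le> A"
    and B: "finite B" and small: "\<And>k. k \<notin> B \<Longrightarrow> cmod (a k) \<le> e" and e: "0 \<le> e"
    and far: "\<And>k. k \<in> B \<Longrightarrow> R \<le> infnorm (y - ivec k)" and R: "0 \<le> R"
  shows "(\<lambda>k. a k * g (y - ivec k)) summable_on UNIV"
    and "cmod (\<Sum>\<^sub>\<infinity>k. a k * g (y - ivec k)) \<le> real (card B) * (A * C * (1 + R) powr (- N)) + e * C * L"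
proof -
  define X where "X = A * C * (1 + R) powr (- N)"
  define K where "K k = (1 + infnorm (y - ivec k)) powr (- (2 * real CARD('d)))" for k
  have X0: "0 \<le> X" unfolding X_def using A[of 0] C by (simp add: order_trans[OF norm_ge_zero])
  have term_le: "cmod (a k * g (y - ivec k)) \<le> (if k \<in> B then X else 0) + e * C * K k" for k
  proof (cases "k \<in> B")
    case True
    have "(1 + infnorm (y - ivec k)) powr (- N) \<le> (1 + R) powr (- N)"
      using far[OF True] R N by (intro powr_mono2') auto
    then have "cmod (g (y - ivec k)) \<le> C * (1 + R) powr (- N)"
      using g[of "y - ivec k"] C by (meson mult_left_mono order_trans)
    then have "cmod (a k * g (y - ivec k)) \<le> X"
      unfolding norm_mult X_def using A[of k] by (simp add: mult.assoc mult_mono order_trans[OF norm_ge_zero])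
    moreover have "0 \<le> e * C * K k" unfolding K_def using e C by simp
    ultimately show ?thesis using True by simp
  next
    case False
    have "(1 + infnorm (y - ivec k)) powr (- N) \<le> K k"
      unfolding K_def using N infnorm_pos_le[of "y - ivec k"] by (intro powr_mono) auto
    then have "cmod (g (y - ivec k)) \<le> C * K k"
      using g[of "y - ivec k"] C by (meson mult_left_mono order_trans)
    then have "cmod (a k * g (y - ivec k)) \<le> e * (C * K k)"
      unfolding norm_mult using small[OF False] e by (intro mult_mono) auto
    then show ?thesis using False by (simp add: mult_ac)
  qed
  have finite_sums_le: "(\<Sum>k\<in>F. cmod (a k * g (y - ivec k))) \<le> real (card B) * X + e * C * L"
    if F: "finite F" for F
  proof -
    have "(\<Sum>k\<in>F. cmod (a k * g (y - ivec k))) \<le> (\<Sum>k\<in>F. (if k \<in> B then X else 0)) + e * C * (\<Sum>k\<in>F. K k)"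
      using term_le by (simp add: sum_mono sum.distrib[symmetric] sum_distrib_left)
    also have "(\<Sum>k\<in>F. (if k \<in> B then X else 0)) = real (card (F \<inter> B)) * X"
      using F by (simp add: sum.If_cases Int_def)
    also have "\<dots> \<le> real (card B) * X"
      using X0 B by (intro mult_right_mono) (auto intro: card_mono)
    also have "e * C * (\<Sum>k\<in>F. K k) \<le> e * C * L"
      using L[OF F] e C unfolding K_def by (intro mult_left_mono) auto
    finally show ?thesis by simp
  qed
  have abs_summable: "(\<lambda>k. norm (a k * g (y - ivec k))) summable_on UNIV"
    by (rule nonneg_bdd_above_summable_on) (use finite_sums_le in \<open>auto intro!: bdd_aboveI2\<close>)
  then show "(\<lambda>k. a k * g (y - ivec k)) summable_on UNIV"
    by (rule abs_summable_summable)
  have "cmod (\<Sum>\<^sub>\<infinity>k. a k * g (y - ivec k)) \<le> (\<Sum>\<^sub>\<infinity>k. cmod (a k * g (y - ivec k)))"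
    by (rule norm_infsum_bound[OF abs_summable])
  also have "\<dots> \<le> real (card B) * X + e * C * L"
    by (rule infsum_le_finite_sums[OF abs_summable]) (use finite_sums_le in auto)
  finally show "cmod (\<Sum>\<^sub>\<infinity>k. a k * g (y - ivec k)) \<le> real (card B) * (A * C * (1 + R) powr (- N)) + e * C * L"
    unfolding X_def .
qed

lemma infnorm_rescaled_ge_if_notin_cball:
  fixes x :: "real ^ 'd::finite" and k :: "int ^ 'd"
  assumes "x \<notin> cball (2 powr (- real j) *\<^sub>R ivec k) (sqrt (real CARD('d)) * 2 powr ((\<eta> - 1) * real j))"
  shows "2 powr (\<eta> * real j) \<le> infnorm ((2 ^ j) *\<^sub>R x - ivec k)"
proof -
  let ?c = "2 powr (- real j) *\<^sub>R ivec k"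
  have "sqrt (real CARD('d)) * 2 powr ((\<eta> - 1) * real j) < norm (x - ?c)"
    using assms by (simp add: dist_norm norm_minus_commute)
  also have "norm (x - ?c) \<le> sqrt (real CARD('d)) * infnorm (x - ?c)"
    using norm_le_infnorm[of "x - ?c"] by simp
  finally have "2 powr ((\<eta> - 1) * real j) < infnorm (x - ?c)"
    by (simp add: mult_less_cancel_left_pos)
  then have "2 ^ j * 2 powr ((\<eta> - 1) * real j) \<le> 2 ^ j * infnorm (x - ?c)"
    by simp
  also have "2 ^ j * infnorm (x - ?c) = infnorm ((2 ^ j) *\<^sub>R (x - ?c))"
    by (simp add: infnorm_mul)
  also have "(2 ^ j) *\<^sub>R (x - ?c) = (2 ^ j) *\<^sub>R x - ivec k"
  proof -
    have "(2::real) ^ j * 2 powr (- real j) = 1"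
      by (simp add: powr_realpow[symmetric] powr_add[symmetric])
    then show ?thesis by (simp add: scaleR_diff_right)
  qed
  also have "(2::real) ^ j * 2 powr ((\<eta> - 1) * real j) = 2 powr (\<eta> * real j)"
    by (simp add: powr_realpow[symmetric] powr_add[symmetric] algebra_simps)
  finally show ?thesis .
qed

lemma fast_decay_uniform_bound:
  fixes g :: "'i \<Rightarrow> 'd::finite fn"
  assumes "finite I" and "\<And>i. i \<in> I \<Longrightarrow> fast_decay (g i)"
  obtains C where "0 \<le> C" "\<And>i z. i \<in> I \<Longrightarrow> cmod (g i z) \<le> C * (1 + infnorm z) powr (- real N)"
proof -
  have "\<forall>i\<in>I. \<exists>C. \<forall>z. cmod (g i z) \<le> C * (1 + infnorm z) powr (- real N)"
    using assms(2) unfolding fast_decay_def by blast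
  then obtain Cg where Cg: "\<And>i z. i \<in> I \<Longrightarrow> cmod (g i z) \<le> Cg i * (1 + infnorm z) powr (- real N)"
    by metis
  show ?thesis
  proof (rule that)
    show "0 \<le> (\<Sum>i\<in>I. max 0 (Cg i))" by (intro sum_nonneg) simp
    fix i z assume i: "i \<in> I"
    have "Cg i \<le> (\<Sum>i\<in>I. max 0 (Cg i))"
      using i \<open>finite I\<close> by (intro order_trans[OF max.cobounded2 member_le_sum[where f="\<lambda>i. max 0 (Cg i)"]]) auto
    then show "cmod (g i z) \<le> (\<Sum>i\<in>I. max 0 (Cg i)) * (1 + infnorm z) powr (- real N)"
      using Cg[OF i, of z] by (meson mult_right_mono order_trans powr_ge_zero)
  qed
qed

lemma smooth_decay_imp_fast_decay: "smooth_decay n g \<Longrightarrow> fast_decay g"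
  by (cases n) auto

definition exceptional_set :: "(nat \<Rightarrow> 'd::finite fn) \<Rightarrow> 'd fn \<Rightarrow> real \<Rightarrow> real \<Rightarrow> nat \<Rightarrow> (real ^ 'd) set" where
  "exceptional_set \<psi> f \<epsilon> \<eta> j = (\<Union>i\<in>{1..2^CARD('d) - 1}. \<Union>k\<in>large_coeffs (\<psi> i) f \<epsilon> j.
      cball (2 powr (- real j) *\<^sub>R ivec k) (sqrt (real CARD('d)) * 2 powr ((\<eta> - 1) * real j)))"

lemma wavelet_series_bound_off_large_coeffs:
  fixes g f :: "'d::finite fn" and x :: "real ^ 'd"
  assumes coeff: "\<And>k. cmod (coefc g f j k) \<le> M * 2 powr (real CARD('d) * real j)" and M: "0 \<le> M"
    and fin_large: "finite (large_coeffs g f \<epsilon> j)"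
    and card: "real (card (large_coeffs g f \<epsilon> j)) \<le> M powr p * 2 powr ((real CARD('d) - s * p + \<epsilon> * p) * real j)"
    and L: "\<And>(y::real ^ 'd) F. finite F \<Longrightarrow> (\<Sum>k\<in>F. (1 + infnorm (y - ivec k)) powr (- (2 * real CARD('d)))) \<le> L"
    and decay: "\<And>z. cmod (g z) \<le> C * (1 + infnorm z) powr (- real N)" and C: "0 \<le> C"
    and N: "2 * real CARD('d) \<le> real N" "2 * real CARD('d) - s * p + \<epsilon> * p + 1 \<le> \<eta> * real N"
    and far: "\<And>k. k \<in> large_coeffs g f \<epsilon> j \<Longrightarrow>
       x \<notin> cball (2 powr (- real j) *\<^sub>R ivec k) (sqrt (real CARD('d)) * 2 powr ((\<eta> - 1) * real j))"
  shows "cmod (\<Sum>\<^sub>\<infinity>k. coefc g f j k * psi_lam g j k x)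
           \<le> M powr p * M * C * (1/2) ^ j + C * L * (2 powr (- \<epsilon>)) ^ j"
proof -
  define R where "R = 2 powr (\<eta> * real j)"
  have R0: "0 < R" unfolding R_def by simp
  have small: "cmod (coefc g f j k) \<le> 2 powr (- \<epsilon> * real j)" if "k \<notin> large_coeffs g f \<epsilon> j" for k
    using that unfolding large_coeffs_def by simp
  have distant: "R \<le> infnorm ((2 ^ j) *\<^sub>R x - ivec k)" if "k \<in> large_coeffs g f \<epsilon> j" for k
    unfolding R_def using far[OF that] by (rule infnorm_rescaled_ge_if_notin_cball)
  have series: "cmod (\<Sum>\<^sub>\<infinity>k. coefc g f j k * g ((2 ^ j) *\<^sub>R x - ivec k))
      \<le> real (card (large_coeffs g f \<epsilon> j)) * (M * 2 powr (real CARD('d) * real j) * C * (1 + R) powr (- real N))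
         + 2 powr (- \<epsilon> * real j) * C * L"
    using R0 by (intro lattice_series_bound(2)[OF L[where y="(2 ^ j) *\<^sub>R x"] N(1) C decay coeff fin_large small _ distant]) auto
  have "(1 + R) powr (- real N) \<le> R powr (- real N)"
    using R0 by (intro powr_mono2') auto
  also have "R powr (- real N) = 2 powr (- (\<eta> * real N) * real j)"
    unfolding R_def by (simp add: powr_powr algebra_simps)
  finally have R_decay: "(1 + R) powr (- real N) \<le> 2 powr (- (\<eta> * real N) * real j)" .
  have "real (card (large_coeffs g f \<epsilon> j)) * (M * 2 powr (real CARD('d) * real j) * C * (1 + R) powr (- real N))
      \<le> (M powr p * 2 powr ((real CARD('d) - s * p + \<epsilon> * p) * real j)) * (M * 2 powr (real CARD('d) * real j) * C * 2 powr (- (\<eta> * real N) * real j))"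
    using card R_decay M C by (intro mult_mono) (auto intro!: mult_left_mono mult_nonneg_nonneg)
  also have "\<dots> = M powr p * M * C * 2 powr ((2 * real CARD('d) - s * p + \<epsilon> * p - \<eta> * real N) * real j)"
    by (simp add: powr_add[symmetric] algebra_simps)
  also have "\<dots> \<le> M powr p * M * C * 2 powr (- 1 * real j)"
    using N(2) M C by (intro mult_left_mono powr_mono mult_right_mono) auto
  also have "2 powr (- 1 * real j) = (1/2::real) ^ j"
    by (simp add: powr_realpow[symmetric] powr_minus powr_powr power_one_over inverse_eq_divide)
  finally have large_part: "real (card (large_coeffs g f \<epsilon> j)) * (M * 2 powr (real CARD('d) * real j) * C * (1 + R) powr (- real N))
      \<le> M powr p * M * C * (1/2) ^ j" .
  have "2 powr (- \<epsilon> * real j) * C * L = C * L * (2 powr (- \<epsilon>)) ^ j"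
    by (simp add: powr_realpow[symmetric] powr_powr mult_ac)
  then show ?thesis using series large_part unfolding psi_lam_def by linarith
qed

lemma wavelet_levels_majorant_off_exceptional:
  fixes \<psi> :: "nat \<Rightarrow> 'd::finite fn"
  assumes f: "besov s p \<phi> \<psi> f" and p: "1 \<le> p" and s: "0 \<le> s"
    and \<epsilon>: "0 < \<epsilon>" and \<eta>: "0 < \<eta>"
    and decay: "\<And>i. i \<in> {1..2^CARD('d) - 1} \<Longrightarrow> fast_decay (\<psi> i)"
  obtains T where "summable T"
    "\<And>j x. x \<notin> exceptional_set \<psi> f \<epsilon> \<eta> j \<Longrightarrow> cmod (Qop \<psi> f j x) \<le> T j"
proof -
  let ?I = "{1..2^CARD('d) - 1} :: nat set"
  let ?D = "real CARD('d)"
  obtain M where M: "0 \<le> M"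
    and coeff: "\<And>i j k. i \<in> ?I \<Longrightarrow> cmod (coefc (\<psi> i) f j k) \<le> M * 2 powr (?D * real j)"
    and fin_large: "\<And>i j \<epsilon>. i \<in> ?I \<Longrightarrow> finite (large_coeffs (\<psi> i) f \<epsilon> j)"
    and card: "\<And>i j \<epsilon>. i \<in> ?I \<Longrightarrow>
       real (card (large_coeffs (\<psi> i) f \<epsilon> j)) \<le> M powr p * 2 powr ((?D - s * p + \<epsilon> * p) * real j)"
    using besov_coefficient_bounds[OF f p s] by blast
  obtain L where L: "\<And>(y::real ^ 'd) F. finite F \<Longrightarrow>
      (\<Sum>k\<in>F. (1 + infnorm (y - ivec k)) powr (- (2 * ?D))) \<le> L"
    using lattice_sum_inverse_powr_bounded[where 'd='d] by blast
  define N :: nat where "N = nat \<lceil>(2 * ?D + \<epsilon> * p + 1) / \<eta> + 2 * ?D\<rceil>"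
  have N_ge: "(2 * ?D + \<epsilon> * p + 1) / \<eta> + 2 * ?D \<le> real N"
    unfolding N_def by linarith
  moreover have "0 \<le> (2 * ?D + \<epsilon> * p + 1) / \<eta>" using \<epsilon> p \<eta> by simp
  ultimately have N1: "2 * ?D \<le> real N" by linarith
  have "(2 * ?D + \<epsilon> * p + 1) / \<eta> \<le> real N"
    using N_ge by simp
  then have "2 * ?D + \<epsilon> * p + 1 \<le> \<eta> * real N"
    using \<eta> by (simp add: divide_le_eq mult.commute)
  then have N2: "2 * ?D - s * p + \<epsilon> * p + 1 \<le> \<eta> * real N"
    using s p by (smt (verit) mult_nonneg_nonneg)
  obtain C where C: "0 \<le> C" "\<And>i z. i \<in> ?I \<Longrightarrow> cmod (\<psi> i z) \<le> C * (1 + infnorm z) powr (- real N)"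
    using fast_decay_uniform_bound[of ?I \<psi> N] decay by blast
  define T where "T j = real (card ?I) * (M powr p * M * C * (1/2) ^ j + C * L * (2 powr (- \<epsilon>)) ^ j)" for j
  show ?thesis
  proof (rule that)
    have "norm (2 powr (- \<epsilon>)) < (1::real)" using \<epsilon> by (simp add: powr_less_one)
    then show "summable T"
      unfolding T_def by (intro summable_mult summable_add summable_geometric) simp_all
  next
    fix j x assume x: "x \<notin> exceptional_set \<psi> f \<epsilon> \<eta> j"
    have "cmod (Qop \<psi> f j x) \<le> (\<Sum>i\<in>?I. cmod (\<Sum>\<^sub>\<infinity>k. coefc (\<psi> i) f j k * psi_lam (\<psi> i) j k x))"
      unfolding Qop_def by (rule norm_sum)
    also have "\<dots> \<le> (\<Sum>i\<in>?I. M powr p * M * C * (1/2) ^ j + C * L * (2 powr (- \<epsilon>)) ^ j)"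
    proof (rule sum_mono)
      fix i assume i: "i \<in> ?I"
      have far: "x \<notin> cball (2 powr (- real j) *\<^sub>R ivec k) (sqrt ?D * 2 powr ((\<eta> - 1) * real j))"
        if "k \<in> large_coeffs (\<psi> i) f \<epsilon> j" for k
      proof
        assume "x \<in> cball (2 powr (- real j) *\<^sub>R ivec k) (sqrt ?D * 2 powr ((\<eta> - 1) * real j))"
        then have "x \<in> exceptional_set \<psi> f \<epsilon> \<eta> j"
          unfolding exceptional_set_def by (intro UN_I[OF i] UN_I[OF that])
        with x show False ..
      qed
      show "cmod (\<Sum>\<^sub>\<infinity>k. coefc (\<psi> i) f j k * psi_lam (\<psi> i) j k x)
          \<le> M powr p * M * C * (1/2) ^ j + C * L * (2 powr (- \<epsilon>)) ^ j"
        using wavelet_series_bound_off_large_coeffs[OF coeff[OF i] M fin_large[OF i] card[OF i] L C(2)[OF i] C(1) N1 N2 far]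
        by simp
    qed
    finally show "cmod (Qop \<psi> f j x) \<le> T j" unfolding T_def by simp
  qed
qed

lemma convergent_Pop_if_eventually_off_exceptional:
  fixes \<psi> :: "nat \<Rightarrow> 'd::finite fn"
  assumes f: "besov s p \<phi> \<psi> f" and p: "1 \<le> p" and s: "0 \<le> s"
    and \<epsilon>: "0 < \<epsilon>" and \<eta>: "0 < \<eta>"
    and decay: "\<And>i. i \<in> {1..2^CARD('d) - 1} \<Longrightarrow> fast_decay (\<psi> i)"
    and x: "\<And>j. j \<ge> J \<Longrightarrow> x \<notin> exceptional_set \<psi> f \<epsilon> \<eta> j"
  shows "convergent (\<lambda>j. Pop \<phi> \<psi> f j x)"
proof -
  have "summable (\<lambda>l. Qop \<psi> f l x)"
  proof (rule wavelet_levels_majorant_off_exceptional[OF f p s \<epsilon> \<eta> decay])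
    fix T assume T: "summable T"
      and bound: "\<And>j x. x \<notin> exceptional_set \<psi> f \<epsilon> \<eta> j \<Longrightarrow> cmod (Qop \<psi> f j x) \<le> T j"
    show "summable (\<lambda>l. Qop \<psi> f l x)"
      by (rule summable_comparison_test'[OF T, of J]) (simp add: bound x)
  qed
  then have "convergent (\<lambda>j. \<Sum>l<j. Qop \<psi> f l x)"
    by (simp add: summable_iff_convergent)
  then show ?thesis
    unfolding Pop_def by (intro convergent_add convergent_const)
qed

section \<open>Hausdorff measure of limsup sets of balls\<close>

lemma hausdorff_pre_le_suminf_of_cover:
  fixes E :: "'a::metric_space set" and V :: "nat \<Rightarrow> nat \<Rightarrow> 'a set" and G :: "nat \<Rightarrow> real"
  assumes cover: "E \<subseteq> (\<Union>j. \<Union>m. V j m)"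
    and bounded: "\<And>j m. bounded (V j m)" and small: "\<And>j m. diameter (V j m) \<le> \<delta>"
    and G: "\<And>j F. finite F \<Longrightarrow> (\<Sum>m\<in>F. diameter (V j m) powr t) \<le> G j" and "summable G"
  shows "hausdorff_pre t \<delta> E \<le> ennreal (suminf G)"
proof -
  define U where "U n = V (fst (prod_decode n)) (snd (prod_decode n))" for n
  define h where "h n = diameter (U n) powr t" for n
  have G0: "0 \<le> G j" for j using G[of "{}" j] by simp
  have partial_sums: "(\<Sum>n<N. h n) \<le> suminf G" for N
  proof -
    define S where "S = prod_decode ` {..<N}"
    have "(\<Sum>n<N. h n) = (\<Sum>q\<in>S. diameter (V (fst q) (snd q)) powr t)"
      unfolding S_def h_def U_def
      by (subst sum.reindex) (auto intro: inj_on_subset[OF inj_prod_decode])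
    also have "\<dots> \<le> (\<Sum>q\<in>fst ` S \<times> snd ` S. diameter (V (fst q) (snd q)) powr t)"
      using subset_fst_snd[of S] by (intro sum_mono2) (auto simp: S_def)
    also have "\<dots> = (\<Sum>j\<in>fst ` S. \<Sum>m\<in>snd ` S. diameter (V j m) powr t)"
      by (simp add: sum.cartesian_product split_beta)
    also have "\<dots> \<le> (\<Sum>j\<in>fst ` S. G j)"
      by (intro sum_mono G) (simp add: S_def)
    also have "\<dots> \<le> suminf G"
      using \<open>summable G\<close> G0 by (intro sum_le_suminf) (auto simp: S_def)
    finally show ?thesis .
  qed
  have h0: "0 \<le> h n" for n unfolding h_def by simp
  have "summable h" by (rule summableI_nonneg_bounded[OF h0 partial_sums])
  have "E \<subseteq> (\<Union>n. U n)"
  proof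
    fix x assume "x \<in> E"
    then obtain j m where "x \<in> V j m" using cover by blast
    then have "x \<in> U (prod_encode (j, m))" by (simp add: U_def)
    then show "x \<in> (\<Union>n. U n)" by blast
  qed
  moreover have "bounded (U n)" "diameter (U n) \<le> \<delta>" for n
    unfolding U_def by (simp_all add: bounded small)
  ultimately have "U \<in> {U. (\<forall>n. bounded (U n) \<and> diameter (U n) \<le> \<delta>) \<and> E \<subseteq> (\<Union>n. U n)}"
    by simp
  then have "hausdorff_pre t \<delta> E \<le> (\<Sum>n. ennreal (h n))"
    unfolding hausdorff_pre_def h_def by (rule INF_lower)
  also have "\<dots> = ennreal (suminf h)"
    using h0 \<open>summable h\<close> by (simp add: suminf_ennreal2)
  also have "\<dots> \<le> ennreal (suminf G)"
    using suminf_le_const[OF \<open>summable h\<close> partial_sums] by (simp add: ennreal_leI)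
  finally show ?thesis .
qed

lemma hausdorff_measure_limsup_balls_eq_0:
  fixes E :: "'a::euclidean_space set" and B :: "nat \<Rightarrow> 'b set"
    and c :: "nat \<Rightarrow> 'b \<Rightarrow> 'a" and r K :: "nat \<Rightarrow> real"
  assumes limsup: "\<And>x J. x \<in> E \<Longrightarrow> \<exists>j\<ge>J. \<exists>b\<in>B j. x \<in> cball (c j b) (r j)"
    and fin: "\<And>j. finite (B j)" and card: "\<And>j. real (card (B j)) \<le> K j"
    and r0: "\<And>j. 0 \<le> r j" and "r \<longlonglongrightarrow> 0"
    and summable: "summable (\<lambda>j. K j * (2 * r j) powr t)" and "0 < t"
  shows "hausdorff_measure t E = 0"
proof -
  obtain enum where enum: "\<And>j. bij_betw (enum j) {..<card (B j)} (B j)"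
    using ex_bij_betw_nat_finite[OF fin] by (metis atLeast0LessThan)
  have small_cover: "hausdorff_pre t \<delta> E \<le> ennreal e" if "0 < \<delta>" "0 < e" for \<delta> e
  proof -
    obtain J1 where J1: "\<And>n. n \<ge> J1 \<Longrightarrow> norm (\<Sum>i. K (i + n) * (2 * r (i + n)) powr t) < e"
      using suminf_exist_split[OF \<open>0 < e\<close> summable] by blast
    have "eventually (\<lambda>j. r j < \<delta> / 2) sequentially"
      using \<open>r \<longlonglongrightarrow> 0\<close> \<open>0 < \<delta>\<close> by (intro order_tendstoD(2)) auto
    then obtain J2 where J2: "\<And>j. j \<ge> J2 \<Longrightarrow> 2 * r j \<le> \<delta>"
      unfolding eventually_sequentially by force
    define J where "J = max J1 J2"
    define V where "V j m = (if m < card (B (j + J)) then cball (c (j + J) (enum (j + J) m)) (r (j + J)) else {})" for j m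
    define G where "G j = K (j + J) * (2 * r (j + J)) powr t" for j
    have diam_V: "diameter (V j m) \<le> (if m < card (B (j + J)) then 2 * r (j + J) else 0)" for j m
      unfolding V_def using r0[of "j + J"] by simp
    have "hausdorff_pre t \<delta> E \<le> ennreal (suminf G)"
    proof (rule hausdorff_pre_le_suminf_of_cover)
      show "E \<subseteq> (\<Union>j. \<Union>m. V j m)"
      proof
        fix x assume "x \<in> E"
        then obtain j b where "j \<ge> J" "b \<in> B j" "x \<in> cball (c j b) (r j)"
          using limsup by blast
        moreover obtain m where "m < card (B j)" "enum j m = b"
          using enum[of j] \<open>b \<in> B j\<close> unfolding bij_betw_def by (metis imageE lessThan_iff)
        ultimately have "x \<in> V (j - J) m" unfolding V_def by simp
        then show "x \<in> (\<Union>j. \<Union>m. V j m)" by blast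
      qed
      show "bounded (V j m)" for j m unfolding V_def by simp
      show "diameter (V j m) \<le> \<delta>" for j m
      proof -
        have "2 * r (j + J) \<le> \<delta>" by (rule J2) (simp add: J_def)
        then show ?thesis using diam_V[of j m] \<open>0 < \<delta>\<close> by (simp split: if_splits)
      qed
      show "(\<Sum>m\<in>F. diameter (V j m) powr t) \<le> G j" if "finite F" for j F
      proof -
        let ?c = "card (B (j + J))" and ?w = "(2 * r (j + J)) powr t"
        have "(\<Sum>m\<in>F. diameter (V j m) powr t) \<le> (\<Sum>m\<in>F. if m \<in> {..<?c} then ?w else 0)"
          using diam_V \<open>0 < t\<close> by (intro sum_mono) (auto simp: V_def intro: powr_mono2)
        also have "\<dots> = (\<Sum>m\<in>F \<inter> {..<?c}. ?w)"
          using that by (rule sum.inter_restrict[symmetric])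
        also have "\<dots> \<le> real ?c * ?w"
        proof -
          have "card (F \<inter> {..<?c}) \<le> ?c" using card_mono[of "{..<?c}" "F \<inter> {..<?c}"] by auto
          then show ?thesis by (simp add: mult_right_mono)
        qed
        also have "\<dots> \<le> G j"
          unfolding G_def using card by (intro mult_right_mono) auto
        finally show ?thesis .
      qed
      show "summable G"
        unfolding G_def using summable by (rule summable_ignore_initial_segment)
    qed
    also have "suminf G \<le> e"
      using J1[of J] unfolding G_def J_def by simp
    finally show ?thesis by (simp add: ennreal_leI)
  qed
  have "hausdorff_pre t \<delta> E \<le> 0" if "0 < \<delta>" for \<delta>
    by (rule ennreal_le_epsilon) (simp add: small_cover[OF that])
  then show ?thesis unfolding hausdorff_measure_def by simp
qed

section \<open>The divergence set\<close>

lemma hausdorff_dim_le_if_hausdorff_measure_eq_0: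
  fixes E :: "'a::metric_space set"
  assumes "0 \<le> a" and null: "\<And>t. a < t \<Longrightarrow> hausdorff_measure t E = 0"
  shows "hausdorff_dim E \<le> ereal a"
proof (cases "E = {}")
  case False
  have "Inf {ereal t | t. t > 0 \<and> hausdorff_measure t E = 0} \<le> ereal a"
  proof (rule ereal_le_epsilon2)
    fix e :: real assume "0 < e"
    then have "ereal (a + e) \<in> {ereal t | t. t > 0 \<and> hausdorff_measure t E = 0}"
      using \<open>0 \<le> a\<close> null[of "a + e"] by auto
    then show "Inf {ereal t | t. t > 0 \<and> hausdorff_measure t E = 0} \<le> ereal a + ereal e"
      by (simp add: Inf_lower)
  qed
  then show ?thesis using False unfolding hausdorff_dim_def by simp
qed (simp add: hausdorff_dim_def)

lemma LIMSEQ_two_powr_neg_mult: "0 < c \<Longrightarrow> (\<lambda>j::nat. (2::real) powr (- c * real j)) \<longlonglongrightarrow> 0"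
proof -
  assume "0 < c"
  then have "(\<lambda>j::nat. (2 powr (- c)) ^ j) \<longlonglongrightarrow> 0"
    by (intro LIMSEQ_power_zero) (simp add: powr_less_one)
  moreover have "(2 powr (- c)) ^ j = (2::real) powr (- c * real j)" for j :: nat
    by (simp add: powr_realpow[symmetric] powr_powr mult.commute)
  ultimately show ?thesis by simp
qed

lemma divergence_set_empty_if_supercritical:
  fixes \<psi> :: "nat \<Rightarrow> 'd::finite fn"
  assumes f: "besov s p \<phi> \<psi> f" and p: "1 \<le> p" and s: "0 \<le> s"
    and decay: "\<And>i. i \<in> {1..2^CARD('d) - 1} \<Longrightarrow> fast_decay (\<psi> i)"
    and supercritical: "real CARD('d) - s * p < 0"
  shows "{x. \<not> convergent (\<lambda>j. Pop \<phi> \<psi> f j x)} = {}"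
proof -
  let ?I = "{1..2^CARD('d) - 1} :: nat set"
  let ?D = "real CARD('d)"
  obtain M where "0 \<le> M" "\<And>i j k. i \<in> ?I \<Longrightarrow> cmod (coefc (\<psi> i) f j k) \<le> M * 2 powr (?D * real j)"
    and fin_large: "\<And>i j \<epsilon>. i \<in> ?I \<Longrightarrow> finite (large_coeffs (\<psi> i) f \<epsilon> j)"
    and card: "\<And>i j \<epsilon>. i \<in> ?I \<Longrightarrow>
       real (card (large_coeffs (\<psi> i) f \<epsilon> j)) \<le> M powr p * 2 powr ((?D - s * p + \<epsilon> * p) * real j)"
    using besov_coefficient_bounds[OF f p s] by blast
  define \<epsilon> where "\<epsilon> = (s * p - ?D) / (2 * p)"
  define c where "c = (s * p - ?D) / 2"
  have \<epsilon>: "0 < \<epsilon>" and c: "0 < c" unfolding \<epsilon>_def c_def using supercritical p by simp_all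
  have exponent: "(?D - s * p + \<epsilon> * p) * real j = - c * real j" for j
    unfolding \<epsilon>_def c_def using p by (simp add: field_simps)
  have "(\<lambda>j. M powr p * 2 powr (- c * real j)) \<longlonglongrightarrow> M powr p * 0"
    by (intro tendsto_mult tendsto_const LIMSEQ_two_powr_neg_mult c)
  then have "eventually (\<lambda>j. M powr p * 2 powr (- c * real j) < 1) sequentially"
    by (intro order_tendstoD(2)) auto
  then obtain J where J: "\<And>j. j \<ge> J \<Longrightarrow> M powr p * 2 powr (- c * real j) < 1"
    unfolding eventually_sequentially by blast
  have no_exceptions: "exceptional_set \<psi> f \<epsilon> 1 j = {}" if "j \<ge> J" for j
  proof -
    have "card (large_coeffs (\<psi> i) f \<epsilon> j) = 0" if "i \<in> ?I" for i
      using card[OF that, of \<epsilon> j] J[OF \<open>j \<ge> J\<close>] exponent[of j] by simp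
    then show ?thesis using fin_large unfolding exceptional_set_def by auto
  qed
  have "convergent (\<lambda>j. Pop \<phi> \<psi> f j x)" for x
    by (rule convergent_Pop_if_eventually_off_exceptional[OF f p s \<epsilon> zero_less_one decay, of J])
      (use no_exceptions in auto)
  then show ?thesis by simp
qed

lemma hausdorff_measure_divergence_set_eq_0:
  fixes \<psi> :: "nat \<Rightarrow> 'd::finite fn"
  assumes f: "besov s p \<phi> \<psi> f" and p: "1 \<le> p" and s: "0 \<le> s"
    and decay: "\<And>i. i \<in> {1..2^CARD('d) - 1} \<Longrightarrow> fast_decay (\<psi> i)"
    and t: "0 < t" "real CARD('d) - s * p < t"
  shows "hausdorff_measure t {x. \<not> convergent (\<lambda>j. Pop \<phi> \<psi> f j x)} = 0"
proof -
  let ?I = "{1..2^CARD('d) - 1} :: nat set"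
  let ?D = "real CARD('d)"
  obtain M where "0 \<le> M" "\<And>i j k. i \<in> ?I \<Longrightarrow> cmod (coefc (\<psi> i) f j k) \<le> M * 2 powr (?D * real j)"
    and fin_large: "\<And>i j \<epsilon>. i \<in> ?I \<Longrightarrow> finite (large_coeffs (\<psi> i) f \<epsilon> j)"
    and card: "\<And>i j \<epsilon>. i \<in> ?I \<Longrightarrow>
       real (card (large_coeffs (\<psi> i) f \<epsilon> j)) \<le> M powr p * 2 powr ((?D - s * p + \<epsilon> * p) * real j)"
    using besov_coefficient_bounds[OF f p s] by blast
  define g where "g = t - (?D - s * p)"
  define \<epsilon> where "\<epsilon> = g / (4 * p)"
  define \<eta> where "\<eta> = min (g / (4 * t)) (1/2)"
  have g: "0 < g" unfolding g_def using t by simp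
  have \<epsilon>: "0 < \<epsilon>" "\<epsilon> * p = g / 4" unfolding \<epsilon>_def using g p by simp_all
  have \<eta>: "0 < \<eta>" "\<eta> < 1" "t * \<eta> \<le> g / 4"
    unfolding \<eta>_def using g t by (auto simp: min_def field_simps)
  \<comment> \<open>the ratio of the geometric series bounding the t-content of the level-j balls is 2 powr X\<close>
  define X where "X = ?D - s * p + \<epsilon> * p + t * (\<eta> - 1)"
  have "X < 0" unfolding X_def g_def using \<epsilon> \<eta> g g_def by (simp add: algebra_simps)
  define B where "B j = Sigma ?I (\<lambda>i. large_coeffs (\<psi> i) f \<epsilon> j)" for j
  define center :: "nat \<Rightarrow> nat \<times> (int ^ 'd) \<Rightarrow> real ^ 'd" where "center j b = 2 powr (- real j) *\<^sub>R ivec (snd b)" for j b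
  define r where "r j = sqrt ?D * 2 powr ((\<eta> - 1) * real j)" for j
  define K where "K j = real (card ?I) * (M powr p * 2 powr ((?D - s * p + \<epsilon> * p) * real j))" for j
  show ?thesis
  proof (rule hausdorff_measure_limsup_balls_eq_0[where B = B and c = center and r = r and K = K])
    fix x J assume "x \<in> {x. \<not> convergent (\<lambda>j. Pop \<phi> \<psi> f j x)}"
    then obtain j where "j \<ge> J" "x \<in> exceptional_set \<psi> f \<epsilon> \<eta> j"
      using convergent_Pop_if_eventually_off_exceptional[OF f p s \<epsilon>(1) \<eta>(1) decay, of J x] by auto
    then show "\<exists>j\<ge>J. \<exists>b\<in>B j. x \<in> cball (center j b) (r j)"
      unfolding exceptional_set_def B_def center_def r_def by force
  next
    show "finite (B j)" for j unfolding B_def using fin_large by (intro finite_SigmaI) auto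
  next
    fix j
    have "real (card (B j)) = (\<Sum>i\<in>?I. real (card (large_coeffs (\<psi> i) f \<epsilon> j)))"
      unfolding B_def using fin_large by simp
    also have "\<dots> \<le> (\<Sum>i\<in>?I. M powr p * 2 powr ((?D - s * p + \<epsilon> * p) * real j))"
      using card by (intro sum_mono) auto
    also have "\<dots> = K j" unfolding K_def by simp
    finally show "real (card (B j)) \<le> K j" .
  next
    show "0 \<le> r j" for j unfolding r_def by simp
  next
    have "(\<lambda>j. sqrt ?D * 2 powr (- (1 - \<eta>) * real j)) \<longlonglongrightarrow> sqrt ?D * 0"
      using \<eta> by (intro tendsto_mult tendsto_const LIMSEQ_two_powr_neg_mult) simp
    then show "r \<longlonglongrightarrow> 0" unfolding r_def by simp
  next
    have geometric: "K j * (2 * r j) powr t = (real (card ?I) * M powr p * (2 * sqrt ?D) powr t) * (2 powr X) ^ j" for j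
    proof -
      have "(2 * r j) powr t = (2 * sqrt ?D) powr t * 2 powr (t * (\<eta> - 1) * real j)"
        unfolding r_def by (simp add: powr_mult powr_powr mult_ac)
      moreover have "(2 powr X) ^ j = 2 powr ((?D - s * p + \<epsilon> * p) * real j) * 2 powr (t * (\<eta> - 1) * real j)"
        unfolding X_def by (simp add: powr_realpow[symmetric] powr_powr powr_add[symmetric] algebra_simps)
      ultimately show ?thesis unfolding K_def by (simp add: mult_ac)
    qed
    show "summable (\<lambda>j. K j * (2 * r j) powr t)"
      unfolding geometric using \<open>X < 0\<close> by (intro summable_mult summable_geometric) (simp add: powr_less_one)
  qed (rule t(1))
qed

theorem proposition3p2:
  fixes \<phi> :: "real ^ 'd \<Rightarrow> complex" and \<psi> :: "nat \<Rightarrow> real ^ 'd \<Rightarrow> complex"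
    and f :: "real ^ 'd \<Rightarrow> complex" and s p :: real
  assumes mra: "orth_MRA \<phi>"
    and wav: "associated_wavelets \<phi> \<psi>"
    and smooth_phi: "smooth_decay (nat \<lfloor>s\<rfloor> + 1) \<phi>"
    and smooth_psi: "\<forall>i\<in>{1..2^CARD('d) - 1}. smooth_decay (nat \<lfloor>s\<rfloor> + 1) (\<psi> i)"
    and s: "s \<ge> 0" and p: "p \<ge> 1"
    and f: "besov s p \<phi> \<psi> f"
  shows "hausdorff_dim {x. \<not> convergent (\<lambda>j. Pop \<phi> \<psi> f j x)}
           \<le> ereal (real CARD('d) - s * p)"
proof -
  let ?E = "{x. \<not> convergent (\<lambda>j. Pop \<phi> \<psi> f j x)}"
  have decay: "\<And>i. i \<in> {1..2^CARD('d) - 1} \<Longrightarrow> fast_decay (\<psi> i)"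
    using smooth_psi smooth_decay_imp_fast_decay by blast
  show ?thesis
  proof (cases "?E = {}")
    case False
    then have "0 \<le> real CARD('d) - s * p"
      using divergence_set_empty_if_supercritical[OF f p s decay] by linarith
    then show ?thesis
      using hausdorff_measure_divergence_set_eq_0[OF f p s decay]
      by (intro hausdorff_dim_le_if_hausdorff_measure_eq_0) auto
  qed (simp add: hausdorff_dim_def)
qed

end
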